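(* Let $F$ be a number field, $v$ a non-archimedean place of $F$, and $(m,u)\in\mathcal{O}_F\times\mathcal{O}_F^\times$ with $m^2-4u\notin F^2$. Let $\gamma_{m,u}=\begin{pmatrix}0&1\\-u&m\end{pmatrix}$ and let $\mathrm{G}_{\gamma_{m,u}}(F_v)$ be its centralizer in $\mathrm{GL}_2(F_v)$. If there is $\alpha\in F_v$ with $\alpha^2-m\alpha+u=0$, let $\alpha_1,\alpha_2$ be the roots of $x^2-mx+u$ in $F_v$; then \[ \left\{\begin{pmatrix}1&u^{-1}\alpha_i\\ \alpha_i&1\end{pmatrix}: i\in\{1,2\}\right\}\cup\left\{\begin{pmatrix}1&x\\ \alpha_i&0\end{pmatrix}: x\in F_v^\times,\ i\in\{1,2\}\right\}\cup\left\{\begin{pmatrix}1&x\\0&y\end{pmatrix}: x\in F_v,\ y\in F_v^\times\right\} \] is a set of representatives of $\mathrm{G}_{\gamma_{m,u}}(F_v)\backslash\mathrm{GL}_2(F_v)$. If there is no $\alpha\in F_v$ with $\alpha^2-m\alpha+u=0$, then $\left\{\begin{pmatrix}1&x\\0&y\end{pmatrix}: x\in F_v,\ y\in F_v^\times\right\}$ is a set of representatives of $\mathrm{G}_{\gamma_{m,u}}(F_v)\backslash\mathrm{GL}_2(F_v)$.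
   Context: $F_v$ is the completion of $F$ at $v$ and $\mathcal{O}_F$ the ring of integers of $F$. *)

theory Defs
  imports "HOL-Analysis.Analysis"
begin

definition mat2 :: "'a::zero \<Rightarrow> 'a \<Rightarrow> 'a \<Rightarrow> 'a \<Rightarrow> 'a^2^2" where
  "mat2 a b c d = (\<chi> i j. if i = 1 then (if j = 1 then a else b) else (if j = 1 then c else d))"

definition GL2 :: "(('a::field)^2^2) set" where
  "GL2 = {g. invertible g}"

definition centralizer_GL2 :: "('a::field)^2^2 \<Rightarrow> ('a^2^2) set" where
  "centralizer_GL2 \<gamma> = {g \<in> GL2. g ** \<gamma> = \<gamma> ** g}"

definition gamma_mu :: "'a::field \<Rightarrow> 'a \<Rightarrow> 'a^2^2" where
  "gamma_mu m u = mat2 0 1 (- u) m"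

definition is_rep_set :: "(('a::field)^2^2) set \<Rightarrow> ('a^2^2) set \<Rightarrow> bool" where
  "is_rep_set H R \<longleftrightarrow> R \<subseteq> GL2 \<and>
     (\<forall>g \<in> GL2. \<exists>!r. r \<in> R \<and> (\<exists>h \<in> H. r = h ** g))"

end

theory Submission
  imports Defs
begin

(* The centralizer H of \<gamma> = \<gamma>_{m,u} consists of the invertible matrices a + b \<gamma>, so the
   coset H g is governed by how these act on the columns of g.  If the first column of g is not an
   eigenvector of \<gamma>, it is a cyclic vector and exactly one a + b \<gamma> moves it to (1, 0); the second
   column is then arbitrary up to invertibility.  Otherwise it spans the eigenline of a root \<alpha>
   of x^2 - m x + u.  The covectors (m - \<alpha>, -1) and (\<alpha>, -1) diagonalize every a + b \<gamma>, with
   eigenvalues a + b \<alpha> and a + b (m - \<alpha>), which can be prescribed independently because the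
   roots are distinct.  The first eigenvalue normalizes the first column to (1, \<alpha>), after which
   the (m - \<alpha>, -1)-coordinate of the second column is invariant; the second eigenvalue rescales
   its other coordinate, bringing the second column to (\<alpha> / u, 1) if the invariant vanishes and
   to (x, 0) otherwise. *)

lemma mat2_nth [simp]:
  "mat2 a b c d $ 1 $ 1 = a" "mat2 a b c d $ 1 $ 2 = b"
  "mat2 a b c d $ 2 $ 1 = c" "mat2 a b c d $ 2 $ 2 = d"
  by (simp_all add: mat2_def)

lemma mat2_eq_iff: "mat2 a b c d = mat2 a' b' c' d' \<longleftrightarrow> a = a' \<and> b = b' \<and> c = c' \<and> d = d'"
  by (auto simp: vec_eq_iff forall_2 mat2_def)

lemma mat2_cases:
  fixes g :: "'a::zero^2^2"
  obtains a b c d where "g = mat2 a b c d"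
  using that[of "g$1$1" "g$1$2" "g$2$1" "g$2$2"] by (simp add: vec_eq_iff forall_2)

lemma mat2_mult:
  fixes a b c d :: "'a::comm_ring_1"
  shows "mat2 a b c d ** mat2 a' b' c' d' =
    mat2 (a*a' + b*c') (a*b' + b*d') (c*a' + d*c') (c*b' + d*d')"
  by (simp add: vec_eq_iff forall_2 matrix_matrix_mult_def sum_2)

lemma mat2_one: "mat2 1 0 0 1 = (mat 1 :: 'a::{zero,one}^2^2)"
  by (simp add: vec_eq_iff forall_2 mat_def)

lemma det_mat2: "det (mat2 a b c d) = a*d - b*(c::'a::comm_ring_1)"
  by (simp add: det_2)

lemma mat2_in_GL2_iff: "mat2 a b c d \<in> GL2 \<longleftrightarrow> a*d - b*(c::'a::field) \<noteq> 0"
  by (simp add: GL2_def invertible_det_nz det_mat2)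

lemma invertible_left_cancel:
  fixes L A B :: "'a::comm_ring_1^'n^'n"
  assumes "invertible L" and "L ** A = L ** B"
  shows "A = B"
proof -
  obtain L' where "L' ** L = mat 1" using assms(1) invertible_def by blast
  then show ?thesis by (metis assms(2) matrix_mul_assoc matrix_mul_lid)
qed

lemma is_rep_set_intro:
  fixes H R :: "('a::field^2^2) set"
  assumes "R \<subseteq> GL2"
    and mult: "\<And>h h'. h \<in> H \<Longrightarrow> h' \<in> H \<Longrightarrow> h ** h' \<in> H"
    and left_inverse: "\<And>h. h \<in> H \<Longrightarrow> \<exists>h'\<in>H. h' ** h = mat 1"
    and meets: "\<And>g :: 'a^2^2. g \<in> GL2 \<Longrightarrow> \<exists>h\<in>H. h ** g \<in> R"
    and stabilizes: "\<And>h r. h \<in> H \<Longrightarrow> r \<in> R \<Longrightarrow> h ** r \<in> R \<Longrightarrow> h ** r = r"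
  shows "is_rep_set H R"
  unfolding is_rep_set_def
proof (intro conjI ballI assms(1))
  fix g :: "'a^2^2" assume "g \<in> GL2"
  then obtain h where h: "h \<in> H" "h ** g \<in> R" using meets by blast
  show "\<exists>!r. r \<in> R \<and> (\<exists>h\<in>H. r = h ** g)"
  proof (rule ex1I)
    show "h ** g \<in> R \<and> (\<exists>h'\<in>H. h ** g = h' ** g)" using h by blast
  next
    fix r assume "r \<in> R \<and> (\<exists>h'\<in>H. r = h' ** g)"
    then obtain h' where r: "r \<in> R" "h' \<in> H" "r = h' ** g" by blast
    obtain k where k: "k \<in> H" "k ** h = mat 1" using left_inverse h(1) by blast
    have "r = (h' ** k) ** (h ** g)"
      using r(3) k(2) by (metis matrix_mul_assoc matrix_mul_lid)
    then show "r = h ** g" using stabilizes[OF mult[OF r(2) k(1)] h(2)] r(1) by simp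
  qed
qed

lemma centralizer_GL2_mult:
  "h \<in> centralizer_GL2 c \<Longrightarrow> h' \<in> centralizer_GL2 c \<Longrightarrow> h ** h' \<in> centralizer_GL2 c"
  unfolding centralizer_GL2_def GL2_def
  by (auto simp: invertible_mult) (metis matrix_mul_assoc)

lemma centralizer_GL2_left_inverse:
  assumes "h \<in> centralizer_GL2 c"
  shows "\<exists>h'\<in>centralizer_GL2 c. h' ** h = mat 1"
proof -
  from assms have "invertible h" and hc: "h ** c = c ** h"
    unfolding centralizer_GL2_def GL2_def by auto
  then obtain h' where hh': "h ** h' = mat 1" and h'h: "h' ** h = mat 1"
    unfolding invertible_def by blast
  have "h' ** c = h' ** (c ** h) ** h'"
    using hh' by (metis matrix_mul_assoc matrix_mul_rid)
  also have "\<dots> = c ** h'"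
    using h'h by (metis hc matrix_mul_assoc matrix_mul_lid)
  finally have "h' ** c = c ** h'" .
  moreover have "invertible h'" using hh' h'h unfolding invertible_def by blast
  ultimately show ?thesis using h'h unfolding centralizer_GL2_def GL2_def by blast
qed

(* a + b \<gamma>_{m,u} *)
definition gamma_poly :: "'a::comm_ring_1 \<Rightarrow> 'a \<Rightarrow> 'a \<Rightarrow> 'a \<Rightarrow> 'a^2^2" where
  "gamma_poly m u a b = mat2 a b (- u * b) (a + m * b)"

lemma centralizer_gamma_mu_iff:
  fixes m u :: "'a::field"
  shows "h \<in> centralizer_GL2 (gamma_mu m u) \<longleftrightarrow> h \<in> GL2 \<and> (\<exists>a b. h = gamma_poly m u a b)"
proof -
  obtain p q r s where h: "h = mat2 p q r s" by (rule mat2_cases)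
  have "h ** gamma_mu m u = gamma_mu m u ** h \<longleftrightarrow> r = - u * q \<and> s = p + m * q"
    unfolding h gamma_mu_def mat2_mult mat2_eq_iff by (auto simp: algebra_simps)
  then show ?thesis
    unfolding centralizer_GL2_def h gamma_poly_def mat2_eq_iff by auto
qed

lemma centralizer_gamma_mu_cases:
  fixes m u :: "'a::field"
  assumes "h \<in> centralizer_GL2 (gamma_mu m u)"
  obtains a b where "h = gamma_poly m u a b" and "det (gamma_poly m u a b) \<noteq> 0"
  using assms by (auto simp: centralizer_gamma_mu_iff GL2_def invertible_det_nz)

lemma det_gamma_poly: "det (gamma_poly m u a b) = a * (a + m * b) + u * b^2"
  by (simp add: gamma_poly_def det_mat2 algebra_simps power2_eq_square)

lemma gamma_poly_one: "gamma_poly m u 1 0 = mat 1"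
  by (simp add: gamma_poly_def mat2_one)

lemma quadratic_root_const:
  fixes m u \<alpha> :: "'a::comm_ring_1"
  assumes "\<alpha>^2 - m * \<alpha> + u = 0"
  shows "u = m * \<alpha> - \<alpha>^2"
proof -
  have "u = (\<alpha>^2 - m * \<alpha> + u) - (\<alpha>^2 - m * \<alpha>)" by simp
  also have "\<dots> = m * \<alpha> - \<alpha>^2" using assms by simp
  finally show ?thesis .
qed

lemma quadratic_root_facts:
  fixes m u \<alpha> :: "'a::field"
  assumes u: "u \<noteq> 0" and d: "m^2 - 4 * u \<noteq> 0" and root: "\<alpha>^2 - m * \<alpha> + u = 0"
  shows "\<alpha> \<noteq> 0" and "\<alpha> * (m - \<alpha>) = u" and "m - \<alpha> \<noteq> 0" and "\<alpha> \<noteq> m - \<alpha>"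
proof -
  show "\<alpha> \<noteq> 0" using u root by auto
  show "\<alpha> * (m - \<alpha>) = u"
    by (simp add: quadratic_root_const[OF root] algebra_simps power2_eq_square)
  then show "m - \<alpha> \<noteq> 0" using u by auto
  have "(m - 2 * \<alpha>)^2 = m^2 - 4 * u + 4 * (\<alpha>^2 - m * \<alpha> + u)"
    by (simp add: algebra_simps power2_eq_square)
  then have "(m - 2 * \<alpha>)^2 \<noteq> 0" using d root by simp
  then show "\<alpha> \<noteq> m - \<alpha>" by auto
qed

lemma det_gamma_poly_root:
  fixes m u \<alpha> :: "'a::comm_ring_1"
  assumes "\<alpha>^2 - m * \<alpha> + u = 0"
  shows "det (gamma_poly m u a b) = (a + b * \<alpha>) * (a + b * (m - \<alpha>))"
  by (simp add: quadratic_root_const[OF assms] det_gamma_poly algebra_simps power2_eq_square)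

definition eigen_covectors :: "'a::comm_ring_1 \<Rightarrow> 'a \<Rightarrow> 'a^2^2" where
  "eigen_covectors m \<alpha> = mat2 (m - \<alpha>) (- 1) \<alpha> (- 1)"

lemma eigen_covectors_mult:
  "eigen_covectors m \<alpha> ** mat2 p q r z =
    mat2 ((m - \<alpha>) * p - r) ((m - \<alpha>) * q - z) (\<alpha> * p - r) (\<alpha> * q - z)"
  by (simp add: eigen_covectors_def mat2_mult)

lemma eigen_covectors_diagonalize:
  fixes m u \<alpha> :: "'a::comm_ring_1"
  assumes "\<alpha>^2 - m * \<alpha> + u = 0"
  shows "eigen_covectors m \<alpha> ** gamma_poly m u a b =
    mat2 (a + b * \<alpha>) 0 0 (a + b * (m - \<alpha>)) ** eigen_covectors m \<alpha>"
  by (simp add: quadratic_root_const[OF assms] eigen_covectors_def gamma_poly_def mat2_mult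
      mat2_eq_iff algebra_simps power2_eq_square)

lemma invertible_eigen_covectors:
  fixes m \<alpha> :: "'a::field"
  assumes "\<alpha> \<noteq> m - \<alpha>"
  shows "invertible (eigen_covectors m \<alpha>)"
proof -
  have "det (eigen_covectors m \<alpha>) = \<alpha> - (m - \<alpha>)"
    by (simp add: eigen_covectors_def det_mat2)
  then show ?thesis using assms by (simp add: invertible_det_nz)
qed

lemma linear_interpolation:
  fixes \<alpha> \<beta> s t :: "'a::field"
  assumes "\<alpha> \<noteq> \<beta>"
  shows "\<exists>a b. a + b * \<alpha> = s \<and> a + b * \<beta> = t"
proof -
  define b where "b = (t - s) / (\<beta> - \<alpha>)"
  have "b * (\<beta> - \<alpha>) = t - s" using assms by (simp add: b_def)
  moreover have "s - b * \<alpha> + b * \<beta> = s + b * (\<beta> - \<alpha>)" by (simp add: algebra_simps)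
  ultimately show ?thesis by (intro exI[of _ "s - b * \<alpha>"] exI[of _ b]) simp
qed

definition generic_reps :: "('a::field^2^2) set" where
  "generic_reps = {mat2 1 x 0 y | x y. y \<noteq> 0}"

definition eigen_reps :: "'a::field \<Rightarrow> 'a \<Rightarrow> ('a^2^2) set" where
  "eigen_reps u \<alpha> = insert (mat2 1 (inverse u * \<alpha>) \<alpha> 1) {mat2 1 x \<alpha> 0 | x. x \<noteq> 0}"

definition coset_reps :: "'a::field \<Rightarrow> 'a \<Rightarrow> ('a^2^2) set" where
  "coset_reps m u = (\<Union>\<alpha> \<in> {\<alpha>. \<alpha>^2 - m * \<alpha> + u = 0}. eigen_reps u \<alpha>) \<union> generic_reps"

lemma generic_reps_subset_coset_reps: "generic_reps \<subseteq> coset_reps m u"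
  by (simp add: coset_reps_def)

lemma eigen_reps_subset_coset_reps:
  "\<alpha>^2 - m * \<alpha> + u = 0 \<Longrightarrow> eigen_reps u \<alpha> \<subseteq> coset_reps m u"
  by (auto simp: coset_reps_def)

lemma coset_reps_cases:
  assumes "r \<in> coset_reps m u"
  obtains "r \<in> generic_reps" | \<alpha> where "\<alpha>^2 - m * \<alpha> + u = 0" and "r \<in> eigen_reps u \<alpha>"
  using assms unfolding coset_reps_def by blast

lemma coset_reps_first_column:
  assumes "r \<in> coset_reps m u"
  obtains x c y where "r = mat2 1 x c y" and "c = 0 \<or> c^2 - m * c + u = 0"
  using assms
proof (cases rule: coset_reps_cases)
  case 1
  then show thesis by (auto simp: generic_reps_def intro: that)
next
  case (2 \<alpha>)
  then show thesis by (auto simp: eigen_reps_def intro: that)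
qed

lemma coset_reps_in_eigen_reps:
  assumes "mat2 1 x \<alpha> y \<in> coset_reps m u" and "\<alpha> \<noteq> 0"
  shows "mat2 1 x \<alpha> y \<in> eigen_reps u \<alpha>"
  using assms(1)
proof (cases rule: coset_reps_cases)
  case 1
  then show ?thesis using assms(2) by (auto simp: generic_reps_def mat2_eq_iff)
next
  case (2 \<alpha>')
  then show ?thesis by (auto simp: eigen_reps_def mat2_eq_iff)
qed

lemma generic_reps_subset_GL2: "generic_reps \<subseteq> GL2"
  by (auto simp: generic_reps_def mat2_in_GL2_iff)

lemma eigen_reps_subset_GL2:
  fixes m u \<alpha> :: "'a::field"
  assumes u: "u \<noteq> 0" and d: "m^2 - 4 * u \<noteq> 0" and root: "\<alpha>^2 - m * \<alpha> + u = 0"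
  shows "eigen_reps u \<alpha> \<subseteq> GL2"
proof -
  note facts = quadratic_root_facts[OF u d root]
  have "1 * 1 - inverse u * \<alpha> * \<alpha> = (\<alpha> - (m - \<alpha>)) / (\<alpha> - m)"
    using facts(1,3) by (simp add: field_simps flip: facts(2))
  also have "\<dots> \<noteq> 0" using facts(3,4) by simp
  finally show ?thesis using facts(1) by (auto simp: eigen_reps_def mat2_in_GL2_iff)
qed

lemma coset_reps_subset_GL2:
  fixes m u :: "'a::field"
  assumes "u \<noteq> 0" and "m^2 - 4 * u \<noteq> 0"
  shows "coset_reps m u \<subseteq> GL2"
  using generic_reps_subset_GL2 eigen_reps_subset_GL2[OF assms] by (auto simp: coset_reps_def)

lemma generic_coset_rep:
  fixes m u p q r z :: "'a::field"
  assumes u: "u \<noteq> 0" and g: "mat2 p q r z \<in> GL2"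
    and not_eigen: "r^2 - m * p * r + u * p^2 \<noteq> 0"
  shows "\<exists>h \<in> centralizer_GL2 (gamma_mu m u). h ** mat2 p q r z \<in> generic_reps"
proof -
  define n where "n = r^2 - m * p * r + u * p^2"
  have "n \<noteq> 0" using not_eigen n_def by simp
  (* a + b \<gamma> is the unique element of the centralizer mapping the column (p, r) to (1, 0) *)
  define a b where "a = (u * p - m * r) / n" and "b = r / n"
  define h where "h = gamma_poly m u a b"
  have "det h = ((u * p - m * r) * (u * p) + u * r * r) / (n * n)"
    using \<open>n \<noteq> 0\<close> by (simp add: h_def a_def b_def det_gamma_poly field_simps power2_eq_square)
  also have "(u * p - m * r) * (u * p) + u * r * r = u * n"
    by (simp add: n_def algebra_simps power2_eq_square)
  finally have "det h = u / n" using \<open>n \<noteq> 0\<close> by simp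
  then have "h \<in> centralizer_GL2 (gamma_mu m u)"
    using u \<open>n \<noteq> 0\<close> by (auto simp: centralizer_gamma_mu_iff GL2_def invertible_det_nz h_def)
  have "(u * p - m * r) * p + r * r = n" by (simp add: n_def algebra_simps power2_eq_square)
  then have "a * p + b * r = 1" using \<open>n \<noteq> 0\<close> by (simp add: a_def b_def field_simps)
  moreover have "- u * b * p + (a + m * b) * r = 0"
    using \<open>n \<noteq> 0\<close> by (simp add: a_def b_def field_simps)
  ultimately obtain x y where hg: "h ** mat2 p q r z = mat2 1 x 0 y"
    by (simp add: h_def gamma_poly_def mat2_mult mat2_eq_iff)
  have "y = det (h ** mat2 p q r z)" by (simp add: hg det_mat2)
  also have "\<dots> = det h * det (mat2 p q r z)" by (rule det_mul)
  finally have "y = det h * det (mat2 p q r z)" .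
  then have "y \<noteq> 0" using u g \<open>det h = u / n\<close> \<open>n \<noteq> 0\<close> by (simp add: GL2_def invertible_det_nz)
  then show ?thesis
    using \<open>h \<in> centralizer_GL2 (gamma_mu m u)\<close> hg by (auto simp: generic_reps_def)
qed

lemma eigen_reps_attain_invariant:
  fixes m u \<alpha> s :: "'a::field"
  assumes u: "u \<noteq> 0" and d: "m^2 - 4 * u \<noteq> 0" and root: "\<alpha>^2 - m * \<alpha> + u = 0"
  obtains x y where "mat2 1 x \<alpha> y \<in> eigen_reps u \<alpha>"
    and "(m - \<alpha>) * x - y = s" and "\<alpha> * x - y \<noteq> 0"
proof (cases "s = 0")
  case True
  note facts = quadratic_root_facts[OF u d root]
  have "\<alpha> * (inverse u * \<alpha>) - 1 = (\<alpha> - (m - \<alpha>)) / (m - \<alpha>)"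
    using facts(1,3) by (simp add: field_simps flip: facts(2))
  then have "\<alpha> * (inverse u * \<alpha>) - 1 \<noteq> 0" using facts(3,4) by simp
  moreover have "(m - \<alpha>) * (inverse u * \<alpha>) - 1 = s"
    using True facts(1,3) by (simp add: field_simps flip: facts(2))
  ultimately show ?thesis by (intro that[of "inverse u * \<alpha>" 1]) (auto simp: eigen_reps_def)
next
  case False
  then show ?thesis
    using quadratic_root_facts[OF u d root]
    by (intro that[of "s / (m - \<alpha>)" 0]) (auto simp: eigen_reps_def)
qed

lemma eigen_coset_rep:
  fixes m u \<alpha> p q z :: "'a::field"
  assumes u: "u \<noteq> 0" and d: "m^2 - 4 * u \<noteq> 0" and root: "\<alpha>^2 - m * \<alpha> + u = 0"
    and g: "mat2 p q (\<alpha> * p) z \<in> GL2"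
  shows "\<exists>h \<in> centralizer_GL2 (gamma_mu m u). h ** mat2 p q (\<alpha> * p) z \<in> eigen_reps u \<alpha>"
proof -
  note facts = quadratic_root_facts[OF u d root]
  define s t where "s = (m - \<alpha>) * q - z" and "t = \<alpha> * q - z"
  have "p * z - q * (\<alpha> * p) = - p * t" by (simp add: t_def algebra_simps)
  then have "p \<noteq> 0" and "t \<noteq> 0" using g by (auto simp: mat2_in_GL2_iff)
  obtain x y where r: "mat2 1 x \<alpha> y \<in> eigen_reps u \<alpha>"
    and x_y: "(m - \<alpha>) * x - y = s / p" and "\<alpha> * x - y \<noteq> 0"
    using eigen_reps_attain_invariant[OF u d root] .
  define \<mu> where "\<mu> = (\<alpha> * x - y) / t"
  have "\<mu> \<noteq> 0" using \<open>\<alpha> * x - y \<noteq> 0\<close> \<open>t \<noteq> 0\<close> by (simp add: \<mu>_def)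
  obtain a b where ab: "a + b * \<alpha> = 1 / p" "a + b * (m - \<alpha>) = \<mu>"
    using linear_interpolation[OF facts(4)] by blast
  define h where "h = gamma_poly m u a b"
  have "det h = 1 / p * \<mu>" by (simp add: h_def det_gamma_poly_root[OF root] ab)
  then have h: "h \<in> centralizer_GL2 (gamma_mu m u)"
    using \<open>p \<noteq> 0\<close> \<open>\<mu> \<noteq> 0\<close> by (auto simp: centralizer_gamma_mu_iff GL2_def invertible_det_nz h_def)
  have "eigen_covectors m \<alpha> ** (h ** mat2 p q (\<alpha> * p) z) =
      mat2 (1 / p) 0 0 \<mu> ** (eigen_covectors m \<alpha> ** mat2 p q (\<alpha> * p) z)"
    by (simp add: h_def matrix_mul_assoc eigen_covectors_diagonalize[OF root] ab)
  also have "eigen_covectors m \<alpha> ** mat2 p q (\<alpha> * p) z = mat2 ((m - \<alpha> - \<alpha>) * p) s 0 t"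
    by (simp add: eigen_covectors_mult s_def t_def algebra_simps)
  also have "mat2 (1 / p) 0 0 \<mu> ** \<dots> = mat2 (m - \<alpha> - \<alpha>) (s / p) 0 (\<alpha> * x - y)"
    using \<open>p \<noteq> 0\<close> \<open>t \<noteq> 0\<close> by (simp add: mat2_mult \<mu>_def)
  also have "\<dots> = eigen_covectors m \<alpha> ** mat2 1 x \<alpha> y"
    by (simp add: eigen_covectors_mult x_y)
  finally have "h ** mat2 p q (\<alpha> * p) z = mat2 1 x \<alpha> y"
    by (rule invertible_left_cancel[OF invertible_eigen_covectors[OF facts(4)]])
  with r have "h ** mat2 p q (\<alpha> * p) z \<in> eigen_reps u \<alpha>" by simp
  with h show ?thesis by blast
qed

lemma coset_meets_coset_reps:
  fixes m u :: "'a::field"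
  assumes u: "u \<noteq> 0" and d: "m^2 - 4 * u \<noteq> 0" and "g \<in> GL2"
  shows "\<exists>h \<in> centralizer_GL2 (gamma_mu m u). h ** g \<in> coset_reps m u"
proof -
  obtain p q r z where g: "g = mat2 p q r z" by (rule mat2_cases)
  show ?thesis
  proof (cases "r^2 - m * p * r + u * p^2 = 0")
    case False
    have "mat2 p q r z \<in> GL2" using assms(3) by (simp add: g)
    then obtain h where "h \<in> centralizer_GL2 (gamma_mu m u)" and "h ** mat2 p q r z \<in> generic_reps"
      using generic_coset_rep[OF u _ False] by blast
    then show ?thesis unfolding g using generic_reps_subset_coset_reps by blast
  next
    case True
    have "p \<noteq> 0"
    proof
      assume "p = 0"
      then have "r = 0" using True by simp
      then show False using assms(3) \<open>p = 0\<close> by (simp add: g mat2_in_GL2_iff)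
    qed
    define \<alpha> where "\<alpha> = r / p"
    have r: "r = \<alpha> * p" using \<open>p \<noteq> 0\<close> by (simp add: \<alpha>_def)
    have "p^2 * (\<alpha>^2 - m * \<alpha> + u) = r^2 - m * p * r + u * p^2"
      by (simp add: r algebra_simps power2_eq_square)
    then have root: "\<alpha>^2 - m * \<alpha> + u = 0" using True \<open>p \<noteq> 0\<close> by simp
    have "mat2 p q (\<alpha> * p) z \<in> GL2" using assms(3) by (simp add: g r)
    then obtain h where "h \<in> centralizer_GL2 (gamma_mu m u)"
      and "h ** mat2 p q (\<alpha> * p) z \<in> eigen_reps u \<alpha>"
      using eigen_coset_rep[OF u d root] by blast
    then show ?thesis unfolding g r using eigen_reps_subset_coset_reps[OF root] by blast
  qed
qed

lemma generic_reps_stabilizer: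
  fixes m u :: "'a::field"
  assumes u: "u \<noteq> 0" and h: "h \<in> centralizer_GL2 (gamma_mu m u)"
    and r: "r \<in> generic_reps" and hr: "h ** r \<in> coset_reps m u"
  shows "h ** r = r"
proof -
  obtain a b where h_ab: "h = gamma_poly m u a b" and det: "det (gamma_poly m u a b) \<noteq> 0"
    using h by (rule centralizer_gamma_mu_cases)
  obtain x y where r_xy: "r = mat2 1 x 0 y" using r by (auto simp: generic_reps_def)
  obtain x' c y' where hr': "h ** r = mat2 1 x' c y'" and c: "c = 0 \<or> c^2 - m * c + u = 0"
    using hr by (rule coset_reps_first_column)
  from hr' have "a = 1" and c_b: "c = - u * b"
    by (simp_all add: h_ab r_xy gamma_poly_def mat2_mult mat2_eq_iff)
  have "u * det (gamma_poly m u a b) = c^2 - m * c + u"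
    by (simp add: det_gamma_poly \<open>a = 1\<close> c_b algebra_simps power2_eq_square)
  then have "c = 0" using c det u by auto
  then have "h = mat 1" using u c_b \<open>a = 1\<close> by (simp add: h_ab gamma_poly_one)
  then show ?thesis by simp
qed

lemma eigen_reps_eqI:
  fixes m u \<alpha> :: "'a::field"
  assumes u: "u \<noteq> 0" and d: "m^2 - 4 * u \<noteq> 0" and root: "\<alpha>^2 - m * \<alpha> + u = 0"
    and "r \<in> eigen_reps u \<alpha>" and "r' \<in> eigen_reps u \<alpha>"
    and "(m - \<alpha>) * r $ 1 $ 2 - r $ 2 $ 2 = (m - \<alpha>) * r' $ 1 $ 2 - r' $ 2 $ 2"
  shows "r = r'"
proof -
  note facts = quadratic_root_facts[OF u d root]
  have "(m - \<alpha>) * (inverse u * \<alpha>) - 1 = 0"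
    using facts(1,3) by (simp add: field_simps flip: facts(2))
  then show ?thesis using assms(4-6) facts(3) by (auto simp: eigen_reps_def)
qed

lemma eigen_reps_stabilizer:
  fixes m u \<alpha> :: "'a::field"
  assumes u: "u \<noteq> 0" and d: "m^2 - 4 * u \<noteq> 0" and root: "\<alpha>^2 - m * \<alpha> + u = 0"
    and h: "h \<in> centralizer_GL2 (gamma_mu m u)"
    and r: "r \<in> eigen_reps u \<alpha>" and hr: "h ** r \<in> coset_reps m u"
  shows "h ** r = r"
proof -
  note facts = quadratic_root_facts[OF u d root]
  obtain a b where h_ab: "h = gamma_poly m u a b"
    using h by (rule centralizer_gamma_mu_cases)
  obtain x y where r_xy: "r = mat2 1 x \<alpha> y" using r by (auto simp: eigen_reps_def)
  obtain x' c y' where hr': "h ** r = mat2 1 x' c y'"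
    using hr by (rule coset_reps_first_column)
  have "eigen_covectors m \<alpha> ** mat2 1 x' c y' = eigen_covectors m \<alpha> ** (h ** r)"
    by (simp add: hr')
  also have "\<dots> = mat2 (a + b * \<alpha>) 0 0 (a + b * (m - \<alpha>)) ** (eigen_covectors m \<alpha> ** r)"
    by (simp add: h_ab matrix_mul_assoc eigen_covectors_diagonalize[OF root])
  finally have "eigen_covectors m \<alpha> ** mat2 1 x' c y' =
      mat2 (a + b * \<alpha>) 0 0 (a + b * (m - \<alpha>)) ** (eigen_covectors m \<alpha> ** mat2 1 x \<alpha> y)"
    by (simp add: r_xy)
  note eq = this
  have c: "c = \<alpha>"
    using arg_cong[OF eq, of "\<lambda>M. M $ 2 $ 1"] by (simp add: eigen_covectors_mult mat2_mult)
  have "a + b * \<alpha> = 1"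
    using arg_cong[OF eq, of "\<lambda>M. M $ 1 $ 1"] facts(4) by (simp add: eigen_covectors_mult mat2_mult c)
  then have invariant: "(m - \<alpha>) * x' - y' = (m - \<alpha>) * x - y"
    using arg_cong[OF eq, of "\<lambda>M. M $ 1 $ 2"] by (simp add: eigen_covectors_mult mat2_mult)
  have "mat2 1 x' \<alpha> y' \<in> coset_reps m u" using hr by (simp add: hr' c)
  then have "mat2 1 x' \<alpha> y' \<in> eigen_reps u \<alpha>" using facts(1) by (rule coset_reps_in_eigen_reps)
  then have "mat2 1 x' \<alpha> y' = r"
    by (rule eigen_reps_eqI[OF u d root _ r]) (simp add: r_xy invariant)
  then show ?thesis by (simp add: hr' c)
qed

theorem is_rep_set_coset_reps:
  fixes m u :: "'a::field"
  assumes u: "u \<noteq> 0" and d: "m^2 - 4 * u \<noteq> 0"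
  shows "is_rep_set (centralizer_GL2 (gamma_mu m u)) (coset_reps m u)"
proof (rule is_rep_set_intro)
  show "coset_reps m u \<subseteq> GL2" using u d by (rule coset_reps_subset_GL2)
next
  fix g :: "'a^2^2" assume "g \<in> GL2"
  with u d show "\<exists>h \<in> centralizer_GL2 (gamma_mu m u). h ** g \<in> coset_reps m u"
    by (rule coset_meets_coset_reps)
next
  fix h r assume h: "h \<in> centralizer_GL2 (gamma_mu m u)"
    and r: "r \<in> coset_reps m u" and hr: "h ** r \<in> coset_reps m u"
  from r show "h ** r = r"
  proof (cases rule: coset_reps_cases)
    case 1
    then show ?thesis using generic_reps_stabilizer[OF u h _ hr] by blast
  next
    case (2 \<alpha>)
    then show ?thesis using eigen_reps_stabilizer[OF u d _ h _ hr] by blast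
  qed
qed (auto intro: centralizer_GL2_mult centralizer_GL2_left_inverse)

theorem lemma3p5:
  fixes m u :: "'a::field_char_0"
  assumes "u \<noteq> 0" and "m ^ 2 - 4 * u \<noteq> 0"
  defines "Roots \<equiv> {a. a ^ 2 - m * a + u = 0}"
  defines "R3 \<equiv> {mat2 1 x 0 y | x y. y \<noteq> 0}"
  shows "(Roots \<noteq> {} \<longrightarrow>
            is_rep_set (centralizer_GL2 (gamma_mu m u))
              ({mat2 1 (inverse u * a) a 1 | a. a \<in> Roots}
               \<union> {mat2 1 x a 0 | x a. x \<noteq> 0 \<and> a \<in> Roots} \<union> R3))
       \<and> (Roots = {} \<longrightarrow> is_rep_set (centralizer_GL2 (gamma_mu m u)) R3)"
proof -
  have "(\<Union>\<alpha> \<in> Roots. eigen_reps u \<alpha>) =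
      {mat2 1 (inverse u * a) a 1 | a. a \<in> Roots} \<union> {mat2 1 x a 0 | x a. x \<noteq> 0 \<and> a \<in> Roots}"
    by (auto simp: eigen_reps_def)
  then have "coset_reps m u = {mat2 1 (inverse u * a) a 1 | a. a \<in> Roots}
      \<union> {mat2 1 x a 0 | x a. x \<noteq> 0 \<and> a \<in> Roots} \<union> R3"
    by (simp add: coset_reps_def generic_reps_def Roots_def R3_def)
  then show ?thesis using is_rep_set_coset_reps[OF assms(1,2)] by auto
qed

end
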